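(* Let $n,s,t$ be integers with $n/2>s>t\ge 2$, and suppose that $(t-1)\,f(n/2,s,t)\ge s$. Then there is no graph on $n$ vertices in which every induced subgraph on $s$ vertices contains both a clique of size $t$ and an independent set of size $t$.
   Context: For integers $N>s>t$, $f(N,s,t)$ denotes the largest integer $f$ such that every graph on $N$ vertices in which every induced subgraph on $s$ vertices has an independent set of size at least $t$ must contain an independent set of size at least $f$. (Floors are ignored, so $n/2$ is treated as an integer.) *)

theory Defs
  imports Main
begin

definition simple_graph :: "('a \<Rightarrow> 'a \<Rightarrow> bool) \<Rightarrow> bool" where
  "simple_graph E \<longleftrightarrow> (\<forall>x y. E x y \<longrightarrow> E y x) \<and> (\<forall>x. \<not> E x x)"

definition indep_set :: "('a \<Rightarrow> 'a \<Rightarrow> bool) \<Rightarrow> 'a set \<Rightarrow> bool" where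
  "indep_set E S \<longleftrightarrow> (\<forall>x\<in>S. \<forall>y\<in>S. x \<noteq> y \<longrightarrow> \<not> E x y)"

definition clique_set :: "('a \<Rightarrow> 'a \<Rightarrow> bool) \<Rightarrow> 'a set \<Rightarrow> bool" where
  "clique_set E S \<longleftrightarrow> (\<forall>x\<in>S. \<forall>y\<in>S. x \<noteq> y \<longrightarrow> E x y)"

definition has_indep :: "'a set \<Rightarrow> ('a \<Rightarrow> 'a \<Rightarrow> bool) \<Rightarrow> nat \<Rightarrow> bool" where
  "has_indep U E k \<longleftrightarrow> (\<exists>S\<subseteq>U. card S \<ge> k \<and> indep_set E S)"

definition has_clique :: "'a set \<Rightarrow> ('a \<Rightarrow> 'a \<Rightarrow> bool) \<Rightarrow> nat \<Rightarrow> bool" where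
  "has_clique U E k \<longleftrightarrow> (\<exists>S\<subseteq>U. card S \<ge> k \<and> clique_set E S)"

definition f_ind :: "nat \<Rightarrow> nat \<Rightarrow> nat \<Rightarrow> nat" where
  "f_ind N s t = (GREATEST f. \<forall>(V::nat set) E. finite V \<and> card V = N \<and> simple_graph E \<and>
       (\<forall>U\<subseteq>V. card U = s \<longrightarrow> has_indep U E t) \<longrightarrow> has_indep V E f)"

end

theory Submission
  imports Defs
begin

text \<open>Since s < n/2, deleting fewer than s vertices leaves at least n/2 of them, and the
  remainder still has the local property, so it contains an independent set of size
  f = f(n/2,s,t). Peeling off t - 1 such sets greedily yields a (t-1)-colourable set of
  size at least (t-1) f \<ge> s. An s-subset of it must contain a t-clique, whose vertices
  would need t distinct colours.\<close>

definition colourable :: "('a \<Rightarrow> 'a \<Rightarrow> bool) \<Rightarrow> 'a set \<Rightarrow> nat \<Rightarrow> bool" where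
  "colourable E A k \<longleftrightarrow>
     (\<exists>c. (\<forall>x\<in>A. c x < k) \<and> (\<forall>x\<in>A. \<forall>y\<in>A. x \<noteq> y \<longrightarrow> c x = c y \<longrightarrow> \<not> E x y))"

lemma colourable_empty: "colourable E {} k"
  unfolding colourable_def by simp

lemma colourable_mono: "colourable E A k \<Longrightarrow> k \<le> l \<Longrightarrow> colourable E A l"
  unfolding colourable_def by (meson order_less_le_trans)

lemma colourable_Un_indep_set:
  assumes "colourable E A k" and "indep_set E S"
  shows "colourable E (A \<union> S) (Suc k)"
proof -
  obtain c where c: "\<forall>x\<in>A. c x < k" "\<forall>x\<in>A. \<forall>y\<in>A. x \<noteq> y \<longrightarrow> c x = c y \<longrightarrow> \<not> E x y"
    using assms(1) unfolding colourable_def by blast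
  define c' where "c' x = (if x \<in> S then k else c x)" for x
  have "\<forall>x\<in>A \<union> S. c' x < Suc k"
    using c(1) unfolding c'_def by auto
  moreover have "\<not> E x y" if "x \<in> A \<union> S" "y \<in> A \<union> S" "x \<noteq> y" "c' x = c' y" for x y
  proof (cases "x \<in> S \<longleftrightarrow> y \<in> S")
    case True
    then show ?thesis
      using that c(2) assms(2) unfolding c'_def indep_set_def by (auto split: if_splits)
  next
    case False
    then show ?thesis
      using that c(1) unfolding c'_def by (auto split: if_splits)
  qed
  ultimately show ?thesis
    unfolding colourable_def by blast
qed

lemma card_clique_le_colours:
  assumes "colourable E A k" and "clique_set E S" and "S \<subseteq> A"
  shows "card S \<le> k"
proof -
  obtain c where c: "\<forall>x\<in>A. c x < k" "\<forall>x\<in>A. \<forall>y\<in>A. x \<noteq> y \<longrightarrow> c x = c y \<longrightarrow> \<not> E x y"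
    using assms(1) unfolding colourable_def by blast
  have "inj_on c S"
    using c(2) assms(2,3) unfolding inj_on_def clique_set_def by blast
  moreover have "c ` S \<subseteq> {..<k}"
    using c(1) assms(3) by auto
  ultimately have "card S \<le> card {..<k}"
    by (intro card_inj_on_le) auto
  then show ?thesis
    by simp
qed

lemma has_indep_empty: "has_indep V E 0"
  unfolding has_indep_def indep_set_def by (rule exI[of _ "{}"]) simp

lemma has_indep_mono: "has_indep W E k \<Longrightarrow> W \<subseteq> V \<Longrightarrow> has_indep V E k"
  unfolding has_indep_def by blast

lemma has_indep_f_ind:
  fixes V :: "nat set"
  assumes "t \<le> s" and "finite V" and "card V = N" and "simple_graph E"
    and "\<forall>U\<subseteq>V. card U = s \<longrightarrow> has_indep U E t"
  shows "has_indep V E (f_ind N s t)"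
proof -
  let ?P = "\<lambda>f. \<forall>(V::nat set) E. finite V \<and> card V = N \<and> simple_graph E \<and>
       (\<forall>U\<subseteq>V. card U = s \<longrightarrow> has_indep U E t) \<longrightarrow> has_indep V E f"
  \<comment> \<open>Since t \<le> s the edgeless graph is admissible, so every candidate is at most N
    and the GREATEST in the definition of f_ind is attained.\<close>
  have bounded: "f \<le> N" if "?P f" for f
  proof -
    let ?E0 = "\<lambda>(x::nat) (y::nat). False"
    have "\<forall>U\<subseteq>{0..<N}. card U = s \<longrightarrow> has_indep U ?E0 t"
      using assms(1) unfolding has_indep_def indep_set_def by auto
    moreover have "simple_graph ?E0"
      unfolding simple_graph_def by simp
    ultimately have "has_indep {0..<N} ?E0 f"
      using that[rule_format, of "{0..<N}" ?E0] by simp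
    then obtain S where "S \<subseteq> {0..<N}" "f \<le> card S"
      unfolding has_indep_def by auto
    then show ?thesis
      using card_mono[of "{0..<N}" S] by simp
  qed
  have "?P 0"
    using has_indep_empty by blast
  then have "?P (GREATEST f. ?P f)"
    using bounded by (rule GreatestI_nat)
  then have "?P (f_ind N s t)"
    unfolding f_ind_def .
  then show ?thesis
    using assms(2-5) by blast
qed

lemma has_indep_f_ind_of_card_ge:
  fixes V :: "nat set"
  assumes "t \<le> s" and "finite V" and "simple_graph E"
    and "\<forall>U\<subseteq>V. card U = s \<longrightarrow> has_indep U E t"
    and "W \<subseteq> V" and "N \<le> card W"
  shows "has_indep W E (f_ind N s t)"
proof -
  obtain W' where W': "W' \<subseteq> W" "card W' = N"
    using assms(6) by (meson obtain_subset_with_card_n)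
  have "W' \<subseteq> V"
    using W'(1) assms(5) by (rule order_trans)
  then have "has_indep W' E (f_ind N s t)"
    using assms(1-4) W'(2) by (intro has_indep_f_ind) (auto intro: finite_subset)
  then show ?thesis
    using W'(1) by (rule has_indep_mono)
qed

lemma exists_large_colourable_subset:
  assumes "finite V"
    and indep: "\<forall>W\<subseteq>V. card V < card W + s \<longrightarrow> has_indep W E f"
  shows "\<exists>A\<subseteq>V. min s (k * f) \<le> card A \<and> colourable E A k"
proof (induction k)
  case 0
  show ?case
    using colourable_empty[of E 0] by (intro exI[of _ "{}"]) simp
next
  case (Suc k)
  then obtain A where A: "A \<subseteq> V" "min s (k * f) \<le> card A" "colourable E A k"
    by blast
  show ?case
  proof (cases "s \<le> card A")
    case True
    then show ?thesis
      using A(1) colourable_mono[OF A(3), of "Suc k"] by auto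
  next
    case False
    have finA: "finite A"
      using A(1) assms(1) by (rule finite_subset)
    have "card (V - A) = card V - card A"
      using finA A(1) by (rule card_Diff_subset)
    then have "card V < card (V - A) + s"
      using False card_mono[OF assms(1) A(1)] by linarith
    then have "has_indep (V - A) E f"
      using indep Diff_subset by blast
    then obtain S where S: "S \<subseteq> V - A" "f \<le> card S" "indep_set E S"
      unfolding has_indep_def by blast
    have "card (A \<union> S) = card A + card S"
      using S(1) finA assms(1) by (intro card_Un_disjoint) (auto intro: finite_subset)
    moreover have "k * f \<le> card A"
      using A(2) False by linarith
    ultimately have "min s (Suc k * f) \<le> card (A \<union> S)"
      using S(2) by simp
    moreover have "A \<union> S \<subseteq> V"
      using A(1) S(1) by blast
    ultimately show ?thesis
      using colourable_Un_indep_set[OF A(3) S(3)] by blast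
  qed
qed

theorem mainTheorem6:
  fixes n s t :: nat
  assumes "n div 2 > s" and "s > t" and "t \<ge> 2"
    and "(t - 1) * f_ind (n div 2) s t \<ge> s"
  shows "\<not> (\<exists>(V::nat set) E. finite V \<and> card V = n \<and> simple_graph E \<and>
            (\<forall>U\<subseteq>V. card U = s \<longrightarrow> has_clique U E t \<and> has_indep U E t))"
proof
  assume "\<exists>(V::nat set) E. finite V \<and> card V = n \<and> simple_graph E \<and>
            (\<forall>U\<subseteq>V. card U = s \<longrightarrow> has_clique U E t \<and> has_indep U E t)"
  then obtain V :: "nat set" and E where V: "finite V" "card V = n" and "simple_graph E"
    and local: "\<forall>U\<subseteq>V. card U = s \<longrightarrow> has_clique U E t \<and> has_indep U E t"
    by blast
  have large_indep: "\<forall>W\<subseteq>V. card V < card W + s \<longrightarrow> has_indep W E (f_ind (n div 2) s t)"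
    using V assms(1,2) \<open>simple_graph E\<close> local
    by (auto intro!: has_indep_f_ind_of_card_ge)
  obtain A where A: "A \<subseteq> V" "s \<le> card A" "colourable E A (t - 1)"
    using exists_large_colourable_subset[OF V(1) large_indep, of "t - 1"] assms(4) by auto
  obtain U where "U \<subseteq> A" "card U = s"
    using A(2) obtain_subset_with_card_n by blast
  then obtain S where "S \<subseteq> U" "t \<le> card S" "clique_set E S"
    using local A(1) unfolding has_clique_def by blast
  moreover have "S \<subseteq> A"
    using \<open>S \<subseteq> U\<close> \<open>U \<subseteq> A\<close> by (rule order_trans)
  ultimately have "card S \<le> t - 1"
    using card_clique_le_colours[OF A(3)] by blast
  then show False
    using \<open>t \<le> card S\<close> assms(3) by linarith
qed

end
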